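(* Consider the quantized estimation system below under the identical-models assumption, with sensors grouped into groups $\mathcal{G}_p$ ($p=1,\dots,P$, $P<N$) having identical observation statistical models $(\hat{\mathscr{X}}_p,\hat{\mathscr{F}}_p,\hat{\mathscr{P}}_p^{\boldsymbol{\theta}})$, and each $\mathcal{G}_p$ split into $M_p$ disjoint nonempty subgroups $\mathcal{G}_p^{(m)}$ whose sensors all use the same superquantizer $\hat\Gamma_p^{(m)}=[\hat\gamma_{p1}^{(m)},\dots,\hat\gamma_{pL_p^{(m)}}^{(m)}]^T$, where $\hat\gamma_{pl}^{(m)}$ has $\hat R_{pl}^{(m)}$ levels and quantization regions $\{\hat I_{mpl}^{(r)}\}$. (i) Suppose the interior of $\boldsymbol{\Theta}\subset\mathbb{R}^{D_{\boldsymbol{\theta}}}$ is nonempty and every $q_j^{(\mathbf{s})}(\boldsymbol{\theta})$ is twice differentiable in $\boldsymbol{\theta}$ on $\boldsymbol{\Theta}$. Then for any $\boldsymbol{\theta}$, any quantization regions $\{\hat I_{mpl}^{(r)}\}$ and any statistical models $\{(\hat{\mathscr{X}}_p,\hat{\mathscr{F}}_p,\hat{\mathscr{P}}_p^{\boldsymbol{\theta}})\}$, if $$D_{\boldsymbol{\theta}} > \lambda_{\text{ISM}}\big(\{\mathcal{G}_p^{(m)}\},\{\hat R_{pl}^{(m)}\}\big) := \sum_{p=1}^P\sum_{m=1}^{M_p}\Big(\prod_{l=1}^{L_p^{(m)}}\hat R_{pl}^{(m)}-1\Big),$$ then the Fisher information matrix for estimating $\boldsymbol{\theta}$ is singular.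 (ii) Suppose the interior of $\boldsymbol{\Theta}$ is nonempty and every $q_j^{(\mathbf{s})}(\boldsymbol{\theta})$ is continuous in $\boldsymbol{\theta}$. Then for any $\{\hat I_{mpl}^{(r)}\}$ and any $\{(\hat{\mathscr{X}}_p,\hat{\mathscr{F}}_p,\hat{\mathscr{P}}_p^{\boldsymbol{\theta}})\}$, if the same inequality $D_{\boldsymbol{\theta}} > \lambda_{\text{ISM}}$ holds, the vector parameter space $\boldsymbol{\Theta}$ is not identifiable; moreover, every open subset $\mathcal{U}\subset\boldsymbol{\Theta}$ of $\mathbb{R}^{D_{\boldsymbol{\theta}}}$ contains infinitely many nonidentifiable vector parameter points.
   Context: System: $N$ sensors; sensor $j$ observes $\mathbf{x}_j$ with statistical model $(\mathscr{X}_j,\mathscr{F}_j,\mathscr{P}_j^{\boldsymbol{\theta}})$, the $\mathbf{x}_j$ independent across $j$, with unknown $\boldsymbol{\theta}\in\boldsymbol{\Theta}\subset\mathbb{R}^{D_{\boldsymbol{\theta}}}$. $\mathbf{x}_j$ is partitioned into $L_j$ subvectors $\mathbf{x}_{jl}$, each quantized by an $R_{jl}$-level vector quantizer $\gamma_{jl}(\mathbf{x}_{jl})=\sum_r r\,\mathbb{1}\{\mathbf{x}_{jl}\in I_{jl}^{(r)}\}$ with disjoint regions covering the domain; the superquantizer output $\mathbf{u}_j=\Gamma_j(\mathbf{x}_j)=[\gamma_{j1}(\mathbf{x}_{j1}),\dots,\gamma_{jL_j}(\mathbf{x}_{jL_j})]^T$ is sent error-free to a fusion center, which estimates $\boldsymbol{\theta}$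 from $\mathbf{u}=[\mathbf{u}_1^T,\dots,\mathbf{u}_N^T]^T$. Define $q_j^{(\mathbf{s})}(\boldsymbol{\theta})=\mathscr{P}_j^{\boldsymbol{\theta}}(\Gamma_j(\mathbf{x}_j)=\mathbf{s})$ for each possible outcome $\mathbf{s}$ of $\Gamma_j$; the Fisher information matrix is $\mathbf{J}(\boldsymbol{\theta})=\sum_j\sum_{\mathbf{s}}\frac{1}{q_j^{(\mathbf{s})}}\frac{\partial q_j^{(\mathbf{s})}}{\partial\boldsymbol{\theta}}\big[\frac{\partial q_j^{(\mathbf{s})}}{\partial\boldsymbol{\theta}}\big]^T$. Two distinct points $\boldsymbol{\theta},\boldsymbol{\theta}'$ are observationally equivalent if $\Pr(\mathbf{u}|\boldsymbol{\theta})=\Pr(\mathbf{u}|\boldsymbol{\theta}')$ for all $\mathbf{u}$; a point is identifiable if no other point of $\boldsymbol{\Theta}$ is observationally equivalent to it; $\boldsymbol{\Theta}$ is identifiable if every point is. Identical-models assumption: the statistical models of the observation vectors at some different sensors are known to be the same for all $\boldsymbol{\theta}$, so there are only $P<N$ distinct models. Hence for $j,j'\in\mathcal{G}_p^{(m)}$, $q_j^{(\mathbf{s})}(\boldsymbol{\theta})=q_{j'}^{(\mathbf{s})}(\boldsymbol{\theta})$. *)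

theory Defs
  imports "HOL-Probability.Probability"
begin

text \<open>Superquantizer of subgroup (p,m): component l applies the R(p,m,l)-level
quantizer gam p m l to the l-th subvector sub p m l x of the observation x.\<close>
definition superq ::
  "(nat \<Rightarrow> nat \<Rightarrow> nat \<Rightarrow> 'x \<Rightarrow> 'y) \<Rightarrow> (nat \<Rightarrow> nat \<Rightarrow> nat \<Rightarrow> 'y \<Rightarrow> nat)
   \<Rightarrow> (nat \<Rightarrow> nat \<Rightarrow> nat) \<Rightarrow> nat \<Rightarrow> nat \<Rightarrow> 'x \<Rightarrow> nat list" where
  "superq sub gam L p m x = map (\<lambda>l. gam p m l (sub p m l x)) [0..<L p m]"

definition outcomes :: "(nat \<Rightarrow> nat \<Rightarrow> nat \<Rightarrow> nat) \<Rightarrow> (nat \<Rightarrow> nat \<Rightarrow> nat) \<Rightarrow> nat \<Rightarrow> nat \<Rightarrow> nat list set" where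
  "outcomes R L p m = {s. length s = L p m \<and> (\<forall>l<L p m. s ! l \<in> {1..R p m l})}"

text \<open>q_j^{(s)}(theta) for a sensor j belonging to subgroup grp j = (p,m):
the probability, under the model of group p, that the superquantizer outputs s.\<close>
definition qsens ::
  "(nat \<Rightarrow> 'd \<Rightarrow> 'x measure) \<Rightarrow> (nat \<Rightarrow> nat \<Rightarrow> nat \<Rightarrow> 'x \<Rightarrow> 'y) \<Rightarrow> (nat \<Rightarrow> nat \<Rightarrow> nat \<Rightarrow> 'y \<Rightarrow> nat)
   \<Rightarrow> (nat \<Rightarrow> nat \<Rightarrow> nat) \<Rightarrow> (nat \<Rightarrow> nat \<times> nat) \<Rightarrow> nat \<Rightarrow> nat list \<Rightarrow> 'd \<Rightarrow> real" where
  "qsens Pth sub gam L grp j s th =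
     measure (Pth (fst (grp j)) th)
       {x \<in> space (Pth (fst (grp j)) th). superq sub gam L (fst (grp j)) (snd (grp j)) x = s}"

text \<open>Pr(u | theta): the sensors' observations are independent (product measure),
sensor j having the model of its group; u j is the superquantizer output of sensor j.\<close>
definition pr_u ::
  "nat \<Rightarrow> (nat \<Rightarrow> 'd \<Rightarrow> 'x measure) \<Rightarrow> (nat \<Rightarrow> nat \<Rightarrow> nat \<Rightarrow> 'x \<Rightarrow> 'y) \<Rightarrow> (nat \<Rightarrow> nat \<Rightarrow> nat \<Rightarrow> 'y \<Rightarrow> nat)
   \<Rightarrow> (nat \<Rightarrow> nat \<Rightarrow> nat) \<Rightarrow> (nat \<Rightarrow> nat \<times> nat) \<Rightarrow> (nat \<Rightarrow> nat list) \<Rightarrow> 'd \<Rightarrow> real" where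
  "pr_u N Pth sub gam L grp u th =
     (let Q = PiM {..<N} (\<lambda>j. Pth (fst (grp j)) th) in
      measure Q {x \<in> space Q. \<forall>j<N. superq sub gam L (fst (grp j)) (snd (grp j)) (x j) = u j})"

definition obs_equiv ::
  "nat \<Rightarrow> (nat \<Rightarrow> 'd \<Rightarrow> 'x measure) \<Rightarrow> (nat \<Rightarrow> nat \<Rightarrow> nat \<Rightarrow> 'x \<Rightarrow> 'y) \<Rightarrow> (nat \<Rightarrow> nat \<Rightarrow> nat \<Rightarrow> 'y \<Rightarrow> nat)
   \<Rightarrow> (nat \<Rightarrow> nat \<Rightarrow> nat) \<Rightarrow> (nat \<Rightarrow> nat \<times> nat) \<Rightarrow> 'd \<Rightarrow> 'd \<Rightarrow> bool" where
  "obs_equiv N Pth sub gam L grp th th' \<longleftrightarrow>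
     th \<noteq> th' \<and> (\<forall>u. pr_u N Pth sub gam L grp u th = pr_u N Pth sub gam L grp u th')"

definition identifiable_point ::
  "'d set \<Rightarrow> nat \<Rightarrow> (nat \<Rightarrow> 'd \<Rightarrow> 'x measure) \<Rightarrow> (nat \<Rightarrow> nat \<Rightarrow> nat \<Rightarrow> 'x \<Rightarrow> 'y) \<Rightarrow> (nat \<Rightarrow> nat \<Rightarrow> nat \<Rightarrow> 'y \<Rightarrow> nat)
   \<Rightarrow> (nat \<Rightarrow> nat \<Rightarrow> nat) \<Rightarrow> (nat \<Rightarrow> nat \<times> nat) \<Rightarrow> 'd \<Rightarrow> bool" where
  "identifiable_point Th N Pth sub gam L grp th \<longleftrightarrow>
     (\<forall>th'\<in>Th. \<not> obs_equiv N Pth sub gam L grp th th')"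

definition identifiable_space ::
  "'d set \<Rightarrow> nat \<Rightarrow> (nat \<Rightarrow> 'd \<Rightarrow> 'x measure) \<Rightarrow> (nat \<Rightarrow> nat \<Rightarrow> nat \<Rightarrow> 'x \<Rightarrow> 'y) \<Rightarrow> (nat \<Rightarrow> nat \<Rightarrow> nat \<Rightarrow> 'y \<Rightarrow> nat)
   \<Rightarrow> (nat \<Rightarrow> nat \<Rightarrow> nat) \<Rightarrow> (nat \<Rightarrow> nat \<times> nat) \<Rightarrow> bool" where
  "identifiable_space Th N Pth sub gam L grp \<longleftrightarrow>
     (\<forall>th\<in>Th. identifiable_point Th N Pth sub gam L grp th)"

text \<open>Fisher information matrix J(theta) = sum_j sum_s (1/q) grad q (grad q)^T,
where G j s is the gradient of q_j^{(s)} at theta. (Convention 1/0 = 0.)\<close>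
definition fisher_info ::
  "nat \<Rightarrow> (nat \<Rightarrow> nat list set) \<Rightarrow> (nat \<Rightarrow> nat list \<Rightarrow> real^'n \<Rightarrow> real)
   \<Rightarrow> (nat \<Rightarrow> nat list \<Rightarrow> real^'n) \<Rightarrow> real^'n \<Rightarrow> real^'n^'n" where
  "fisher_info N outs q G th =
     (\<Sum>j<N. \<Sum>s\<in>outs j. (1 / q j s th) *\<^sub>R (\<chi> a b. (G j s) $ a * (G j s) $ b))"

definition lambda_ISM :: "nat \<Rightarrow> (nat \<Rightarrow> nat) \<Rightarrow> (nat \<Rightarrow> nat \<Rightarrow> nat) \<Rightarrow> (nat \<Rightarrow> nat \<Rightarrow> nat \<Rightarrow> nat) \<Rightarrow> int" where
  "lambda_ISM P M L R = (\<Sum>p<P. \<Sum>m<M p. (int (\<Prod>l<L p m. R p m l) - 1))"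

end

theory Submission
  imports Defs "HOL-Homology.Invariance_of_Domain"
begin

text \<open>Sensors of one subgroup share their outcome probabilities, and within a subgroup these
  sum to one; so the law of \<open>u\<close> depends on \<open>\<theta>\<close> only through at most \<open>\<lambda>\<^sub>I\<^sub>S\<^sub>M < D\<close>
  free outcome probabilities. Their gradients therefore span a proper subspace, and any nonzero
  vector orthogonal to it lies in the kernel of the Fisher information matrix. If they are merely
  continuous, invariance of domain forbids them to be injective on any open set of \<open>\<real>\<^sup>D\<close>, so
  every open set contains two distinct observationally equivalent points.\<close>

lemma card_lists_nth_in:
  assumes "\<And>l. finite (A l)"
  shows "card {s. length s = n \<and> (\<forall>l<n. s ! l \<in> A l)} = (\<Prod>l<n. card (A l))"
proof (induction n)
  case 0
  have "{s. length s = 0 \<and> (\<forall>l<0. s ! l \<in> A l)} = {[]}" by auto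
  then show ?case by simp
next
  case (Suc n)
  define T where "T k = {s. length s = k \<and> (\<forall>l<k. s ! l \<in> A l)}" for k
  have "T (Suc n) = (\<lambda>(xs, x). xs @ [x]) ` (T n \<times> A n)"
  proof
    show "T (Suc n) \<subseteq> (\<lambda>(xs, x). xs @ [x]) ` (T n \<times> A n)"
    proof
      fix s assume s: "s \<in> T (Suc n)"
      then have "s = take n s @ [s ! n]"
        unfolding T_def by (simp add: take_Suc_conv_app_nth[symmetric])
      moreover have "(take n s, s ! n) \<in> T n \<times> A n" using s unfolding T_def by auto
      ultimately show "s \<in> (\<lambda>(xs, x). xs @ [x]) ` (T n \<times> A n)" by force
    qed
    show "(\<lambda>(xs, x). xs @ [x]) ` (T n \<times> A n) \<subseteq> T (Suc n)"
      unfolding T_def by (auto simp: nth_append less_Suc_eq)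
  qed
  moreover have "inj_on (\<lambda>(xs, x). xs @ [x]) (T n \<times> A n)"
    by (auto simp: inj_on_def)
  ultimately have "card (T (Suc n)) = card (T n) * card (A n)"
    by (simp add: card_image card_cartesian_product)
  then show ?case using Suc by (simp add: T_def)
qed

lemma card_outcomes: "card (outcomes R L p m) = (\<Prod>l<L p m. R p m l)"
  unfolding outcomes_def using card_lists_nth_in[of "\<lambda>l. {1..R p m l}" "L p m"] by simp

lemma finite_outcomes: "finite (outcomes R L p m)"
proof -
  have "outcomes R L p m \<subseteq> {s. set s \<subseteq> {0..(\<Sum>l<L p m. R p m l)} \<and> length s = L p m}"
    by (force simp: outcomes_def in_set_conv_nth intro: order_trans[OF _ member_le_sum])
  then show ?thesis
    by (rule finite_subset) (simp add: finite_lists_length_eq)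
qed

lemma inner_left_injective:
  fixes a b :: "'a::real_inner"
  assumes "(\<lambda>h. a \<bullet> h) = (\<lambda>h. b \<bullet> h)"
  shows "a = b"
proof -
  have "(a - b) \<bullet> (a - b) = 0" using fun_cong[OF assms, of "a - b"] by (simp add: inner_diff_left)
  then show ?thesis by simp
qed

lemma gradients_sum_eq_0_if_sum_eq_1:
  fixes G :: "'s \<Rightarrow> 'a::real_inner" and f :: "'s \<Rightarrow> 'a \<Rightarrow> real"
  assumes th: "th \<in> interior Th" and "finite S"
    and deriv: "\<And>s. s \<in> S \<Longrightarrow> (f s has_derivative (\<lambda>h. G s \<bullet> h)) (at th)"
    and sum_1: "\<And>t. t \<in> Th \<Longrightarrow> (\<Sum>s\<in>S. f s t) = 1"
  shows "(\<Sum>s\<in>S. G s) = 0"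
proof -
  have "((\<lambda>t. \<Sum>s\<in>S. f s t) has_derivative (\<lambda>h. (\<Sum>s\<in>S. G s) \<bullet> h)) (at th)"
    using has_derivative_sum[of S f "\<lambda>s h. G s \<bullet> h"] deriv by (simp add: inner_sum_left)
  moreover have "((\<lambda>t. \<Sum>s\<in>S. f s t) has_derivative (\<lambda>h. 0 \<bullet> h)) (at th)"
    by (rule has_derivative_transform_within_open[OF _ open_interior th, where f="\<lambda>_. 1"])
       (use sum_1 interior_subset in auto)
  ultimately show ?thesis using has_derivative_unique inner_left_injective by metis
qed

lemma fisher_info_mulv_eq_0:
  assumes "\<forall>j<N. \<forall>s\<in>outs j. G j s \<bullet> v = 0"
  shows "fisher_info N outs q G th *v v = 0"
proof -
  have "(fisher_info N outs q G th *v v) $ i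
      = (\<Sum>j<N. \<Sum>s\<in>outs j. (1 / q j s th) * (G j s) $ i * (G j s \<bullet> v))" for i
    by (simp add: matrix_vector_mult_def fisher_info_def inner_vec_def sum_distrib_left
        sum_distrib_right sum.swap[of _ UNIV] mult.assoc mult.left_commute)
  then show ?thesis using assms by (simp add: vec_eq_iff)
qed

lemma not_invertible_if_mulv_eq_0:
  fixes A :: "real^'n^'n"
  assumes "A *v v = 0" "v \<noteq> 0"
  shows "\<not> invertible A"
  using assms matrix_left_invertible_ker by (auto simp: invertible_def)

lemma continuous_on_not_inj_if_card_less:
  fixes F :: "'i \<Rightarrow> real^'d \<Rightarrow> real"
  assumes fin: "finite I" and card: "card I < CARD('d)"
    and V: "open V" "V \<noteq> {}"
    and cont: "\<And>i. i \<in> I \<Longrightarrow> continuous_on V (F i)"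
  shows "\<exists>x\<in>V. \<exists>y\<in>V. x \<noteq> y \<and> (\<forall>i\<in>I. F i x = F i y)"
proof -
  have "card I \<le> card (UNIV :: 'd set)" using card by simp
  then obtain \<iota> :: "'i \<Rightarrow> 'd" where inj: "inj_on \<iota> I"
    using card_le_inj[OF fin finite] by blast
  define B where "B = (\<lambda>i. axis (\<iota> i) (1::real)) ` I"
  define f where "f x = (\<Sum>i\<in>I. F i x *\<^sub>R axis (\<iota> i) (1::real))" for x
  have f_component: "f x $ \<iota> i = F i x" if "i \<in> I" for x i
  proof -
    have "f x $ \<iota> i = (\<Sum>i'\<in>I. F i' x * (if i' = i then 1 else 0))"
      unfolding f_def sum_component using inj that
      by (intro sum.cong) (auto simp: axis_def inj_on_def)
    then show ?thesis using fin that by (simp add: if_distrib cong: if_cong)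
  qed
  have "\<not> inj_on f V"
  proof
    assume "inj_on f V"
    have "dim (UNIV :: (real^'d) set) \<le> dim (span B)"
    proof (rule invariance_of_dimension_subspaces[of UNIV V "span B" f])
      show "continuous_on V f" unfolding f_def
        by (intro continuous_on_sum continuous_on_scaleR cont continuous_on_const)
      show "f ` V \<subseteq> span B" unfolding f_def B_def
        by (intro image_subsetI span_sum span_scale) (auto intro: span_base)
    qed (use \<open>inj_on f V\<close> V in auto)
    also have "\<dots> \<le> card B" using fin by (simp add: B_def dim_le_card')
    also have "\<dots> \<le> card I" unfolding B_def by (rule card_image_le[OF fin])
    finally show False using card by simp
  qed
  then obtain x y where "x \<in> V" "y \<in> V" "x \<noteq> y" "f x = f y" by (auto simp: inj_on_def)
  then show ?thesis using f_component by metis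
qed

lemma infinite_if_meets_every_open_subset:
  fixes U :: "'a::{real_normed_vector, perfect_space} set"
  assumes "open U" "U \<noteq> {}"
    and meets: "\<And>V. open V \<Longrightarrow> V \<noteq> {} \<Longrightarrow> V \<subseteq> U \<Longrightarrow> \<exists>x\<in>V. Q x"
  shows "infinite {x\<in>U. Q x}"
proof
  assume fin: "finite {x\<in>U. Q x}"
  define W where "W = U - {x\<in>U. Q x}"
  have "open W" unfolding W_def using assms(1) fin by (intro open_Diff finite_imp_closed)
  moreover have "W \<noteq> {}"
  proof
    assume "W = {}"
    then have "finite U" using fin unfolding W_def by (metis Diff_eq_empty_iff finite_subset)
    then show False using assms(1,2) finite_imp_not_open by blast
  qed
  moreover have "W \<subseteq> U" unfolding W_def by blast
  ultimately obtain x where "x \<in> W" "Q x" using meets by blast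
  then show False unfolding W_def by blast
qed

locale identical_models_system =
  fixes Th :: "(real^'d) set"
    and N P :: nat
    and grp :: "nat \<Rightarrow> nat \<times> nat"
    and M :: "nat \<Rightarrow> nat"
    and L :: "nat \<Rightarrow> nat \<Rightarrow> nat"
    and R :: "nat \<Rightarrow> nat \<Rightarrow> nat \<Rightarrow> nat"
    and X :: "nat \<Rightarrow> 'x measure"
    and Pth :: "nat \<Rightarrow> real^'d \<Rightarrow> 'x measure"
    and Y :: "nat \<Rightarrow> nat \<Rightarrow> nat \<Rightarrow> 'y measure"
    and sub :: "nat \<Rightarrow> nat \<Rightarrow> nat \<Rightarrow> 'x \<Rightarrow> 'y"
    and gam :: "nat \<Rightarrow> nat \<Rightarrow> nat \<Rightarrow> 'y \<Rightarrow> nat"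
  assumes grp_range: "\<forall>j<N. fst (grp j) < P \<and> snd (grp j) < M (fst (grp j))"
    and subgroups_nonempty: "\<forall>p<P. \<forall>m<M p. \<exists>j<N. grp j = (p, m)"
    and models: "\<forall>p<P. \<forall>th\<in>Th. prob_space (Pth p th) \<and> sets (Pth p th) = sets (X p)"
    and sub_meas: "\<forall>p<P. \<forall>m<M p. \<forall>l<L p m. sub p m l \<in> measurable (X p) (Y p m l)"
    and gam_meas: "\<forall>p<P. \<forall>m<M p. \<forall>l<L p m. gam p m l \<in> measurable (Y p m l) (count_space UNIV)"
    and gam_levels: "\<forall>p<P. \<forall>m<M p. \<forall>l<L p m. \<forall>y\<in>space (Y p m l). gam p m l y \<in> {1..R p m l}"
begin

definition subgroup_prob :: "nat \<Rightarrow> nat \<Rightarrow> nat list \<Rightarrow> real^'d \<Rightarrow> real" where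
  "subgroup_prob p m s th = measure (Pth p th) {x \<in> space (Pth p th). superq sub gam L p m x = s}"

lemma qsens_eq_subgroup_prob:
  "qsens Pth sub gam L grp j s = subgroup_prob (fst (grp j)) (snd (grp j)) s"
  by (simp add: fun_eq_iff qsens_def subgroup_prob_def)

lemma superq_event_sets:
  assumes "p < P" "m < M p" "th \<in> Th"
  shows "{x \<in> space (Pth p th). superq sub gam L p m x = s} \<in> sets (Pth p th)"
proof -
  have sets_eq: "sets (Pth p th) = sets (X p)" using models assms by blast
  have component_meas: "(\<lambda>x. gam p m l (sub p m l x)) \<in> measurable (Pth p th) (count_space UNIV)"
    if "l < L p m" for l
  proof -
    have "sub p m l \<in> measurable (X p) (Y p m l)" "gam p m l \<in> measurable (Y p m l) (count_space UNIV)"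
      using sub_meas gam_meas assms(1,2) that by blast+
    from measurable_comp[OF this] show ?thesis
      by (simp add: o_def measurable_cong_sets[OF sets_eq refl])
  qed
  show ?thesis
  proof (cases "length s = L p m")
    case True
    then have "{x \<in> space (Pth p th). superq sub gam L p m x = s}
        = {x \<in> space (Pth p th). \<forall>l\<in>{..<L p m}. gam p m l (sub p m l x) = s ! l}"
      by (auto simp: superq_def list_eq_iff_nth_eq)
    also have "\<dots> \<in> sets (Pth p th)"
      using component_meas by (intro sets.sets_Collect_finite_All) (auto simp: measurable_count_space_eq2)
    finally show ?thesis .
  next
    case False
    then have empty: "{x \<in> space (Pth p th). superq sub gam L p m x = s} = {}"
      by (auto simp: superq_def)
    show ?thesis unfolding empty by simp
  qed
qed

lemma superq_in_outcomes:
  assumes "p < P" "m < M p" "th \<in> Th" "x \<in> space (Pth p th)"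
  shows "superq sub gam L p m x \<in> outcomes R L p m"
proof -
  have "sets (Pth p th) = sets (X p)" using models assms(1,3) by blast
  then have x: "x \<in> space (X p)" using assms(4) by (metis sets_eq_imp_space_eq)
  have "gam p m l (sub p m l x) \<in> {1..R p m l}" if "l < L p m" for l
  proof -
    have "sub p m l \<in> measurable (X p) (Y p m l)" using sub_meas assms(1,2) that by blast
    then have "sub p m l x \<in> space (Y p m l)" using x by (rule measurable_space)
    then show ?thesis using gam_levels assms(1,2) that by blast
  qed
  then show ?thesis by (simp add: outcomes_def superq_def)
qed

lemma sum_subgroup_prob:
  assumes "p < P" "m < M p" "th \<in> Th"
  shows "(\<Sum>s\<in>outcomes R L p m. subgroup_prob p m s th) = 1"
proof -
  interpret prob_space "Pth p th" using models assms by blast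
  define E where "E s = {x \<in> space (Pth p th). superq sub gam L p m x = s}" for s
  have "space (Pth p th) = (\<Union>s\<in>outcomes R L p m. E s)"
    using superq_in_outcomes assms unfolding E_def by blast
  then have "1 = measure (Pth p th) (\<Union>s\<in>outcomes R L p m. E s)" using prob_space by simp
  also have "\<dots> = (\<Sum>s\<in>outcomes R L p m. measure (Pth p th) (E s))"
    using superq_event_sets[OF assms] finite_outcomes
    by (intro finite_measure_finite_Union) (auto simp: disjoint_family_on_def E_def)
  finally show ?thesis by (simp add: subgroup_prob_def E_def)
qed

lemma subgroup_prob_eq_0:
  assumes "p < P" "m < M p" "th \<in> Th" "s \<notin> outcomes R L p m"
  shows "subgroup_prob p m s th = 0"
proof -
  have empty: "{x \<in> space (Pth p th). superq sub gam L p m x = s} = {}"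
    using superq_in_outcomes assms by blast
  show ?thesis unfolding subgroup_prob_def empty by simp
qed

lemma outcomes_nonempty:
  assumes "p < P" "m < M p" "Th \<noteq> {}"
  shows "outcomes R L p m \<noteq> {}"
proof
  assume "outcomes R L p m = {}"
  moreover obtain th where "th \<in> Th" using assms(3) by blast
  ultimately show False using sum_subgroup_prob[OF assms(1,2)] by simp
qed

lemma pr_u_eq_prod:
  assumes "th \<in> Th"
  shows "pr_u N Pth sub gam L grp u th = (\<Prod>j<N. qsens Pth sub gam L grp j (u j) th)"
proof -
  define Q where "Q j = Pth (fst (grp j)) th" for j
  define E where "E j = {x \<in> space (Q j). superq sub gam L (fst (grp j)) (snd (grp j)) x = u j}" for j
  have prob: "prob_space (Q j)" and E_sets: "E j \<in> sets (Q j)" if "j < N" for j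
    using grp_range models superq_event_sets assms that by (auto simp: Q_def E_def)
  have emeasure_E: "emeasure (Q j) (E j) = ennreal (qsens Pth sub gam L grp j (u j) th)"
    if "j < N" for j
  proof -
    interpret prob_space "Q j" using prob[OF that] .
    show ?thesis using emeasure_eq_measure[of "E j"] by (simp add: qsens_def Q_def E_def)
  qed
  interpret product: prob_space "PiM {..<N} Q" using prob by (intro prob_space_PiM) auto
  have "{x \<in> space (PiM {..<N} Q). \<forall>j<N. superq sub gam L (fst (grp j)) (snd (grp j)) (x j) = u j}
      = prod_emb {..<N} Q {..<N} (PiE {..<N} E)"
    by (subst prod_emb_PiE_same_index) (auto simp: E_def space_PiM PiE_def Pi_def)
  then have "ennreal (pr_u N Pth sub gam L grp u th)
      = emeasure (PiM {..<N} Q) (prod_emb {..<N} Q {..<N} (PiE {..<N} E))"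
    by (simp add: pr_u_def Let_def Q_def[symmetric] product.emeasure_eq_measure)
  also have "\<dots> = (\<Prod>j<N. emeasure (Q j) (E j))"
    using prob E_sets by (intro emeasure_PiM_emb) auto
  also have "\<dots> = ennreal (\<Prod>j<N. qsens Pth sub gam L grp j (u j) th)"
    using emeasure_E by (simp add: prod_ennreal qsens_def)
  finally show ?thesis
    by (simp add: pr_u_def Let_def prod_nonneg qsens_def)
qed

definition ref_outcome :: "nat \<Rightarrow> nat \<Rightarrow> nat list" where
  "ref_outcome p m = (SOME s. s \<in> outcomes R L p m)"

definition free_outcomes :: "(nat \<times> nat \<times> nat list) set" where
  "free_outcomes = {(p, m, s). p < P \<and> m < M p \<and> s \<in> outcomes R L p m - {ref_outcome p m}}"

definition representative :: "nat \<Rightarrow> nat \<Rightarrow> nat" where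
  "representative p m = (SOME j. j < N \<and> grp j = (p, m))"

lemma ref_outcome_in_outcomes:
  assumes "p < P" "m < M p" "Th \<noteq> {}"
  shows "ref_outcome p m \<in> outcomes R L p m"
  using outcomes_nonempty[OF assms] unfolding ref_outcome_def by (metis ex_in_conv someI_ex)

lemma representative:
  assumes "p < P" "m < M p"
  shows "representative p m < N" "grp (representative p m) = (p, m)"
  using someI_ex[OF subgroups_nonempty[rule_format, OF assms]]
  unfolding representative_def by auto

lemma free_outcomes_eq_UN:
  "free_outcomes = (\<Union>p<P. \<Union>m<M p. (\<lambda>s. (p, m, s)) ` (outcomes R L p m - {ref_outcome p m}))"
  unfolding free_outcomes_def by auto

lemma finite_free_outcomes: "finite free_outcomes"
  unfolding free_outcomes_eq_UN using finite_outcomes by auto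

lemma card_free_outcomes_le:
  assumes "Th \<noteq> {}"
  shows "int (card free_outcomes) \<le> lambda_ISM P M L R"
proof -
  have "card free_outcomes \<le> (\<Sum>p<P. \<Sum>m<M p. card ((\<lambda>s. (p, m, s)) ` (outcomes R L p m - {ref_outcome p m})))"
    unfolding free_outcomes_eq_UN by (intro order_trans[OF card_UN_le] sum_mono card_UN_le) auto
  also have "\<dots> \<le> (\<Sum>p<P. \<Sum>m<M p. card (outcomes R L p m - {ref_outcome p m}))"
    by (intro sum_mono card_image_le) (simp add: finite_outcomes)
  finally have "int (card free_outcomes) \<le> (\<Sum>p<P. \<Sum>m<M p. int (card (outcomes R L p m - {ref_outcome p m})))"
    by (simp flip: of_nat_sum)
  also have "\<dots> = lambda_ISM P M L R"
    unfolding lambda_ISM_def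
  proof (intro sum.cong refl)
    fix p m assume "p \<in> {..<P}" "m \<in> {..<M p}"
    then have ref: "ref_outcome p m \<in> outcomes R L p m" using ref_outcome_in_outcomes assms by simp
    then have "0 < card (outcomes R L p m)" using finite_outcomes card_gt_0_iff by blast
    then have "int (card (outcomes R L p m - {ref_outcome p m})) = int (card (outcomes R L p m)) - 1"
      using ref finite_outcomes by (simp add: of_nat_diff)
    then show "int (card (outcomes R L p m - {ref_outcome p m})) = int (\<Prod>l<L p m. R p m l) - 1"
      by (simp only: card_outcomes)
  qed
  finally show ?thesis .
qed

lemma subgroup_prob_eq_if_free_eq:
  assumes "x \<in> Th" "y \<in> Th" "p < P" "m < M p"
    and free_eq: "\<forall>(p', m', s')\<in>free_outcomes. subgroup_prob p' m' s' x = subgroup_prob p' m' s' y"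
  shows "subgroup_prob p m s x = subgroup_prob p m s y"
proof -
  let ?O = "outcomes R L p m - {ref_outcome p m}"
  have others_eq: "subgroup_prob p m s' x = subgroup_prob p m s' y" if "s' \<in> ?O" for s'
    using free_eq assms(3,4) that by (auto simp: free_outcomes_def)
  have ref_eq: "subgroup_prob p m (ref_outcome p m) t = 1 - (\<Sum>s'\<in>?O. subgroup_prob p m s' t)"
    if "t \<in> Th" for t
  proof -
    have "ref_outcome p m \<in> outcomes R L p m" using ref_outcome_in_outcomes assms(3,4) that by blast
    then show ?thesis
      using sum_subgroup_prob[OF assms(3,4) that] finite_outcomes by (simp add: sum.remove)
  qed
  consider "s \<notin> outcomes R L p m" | "s \<in> ?O" | "s = ref_outcome p m" by blast
  then show ?thesis
  proof cases
    case 1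
    then show ?thesis using subgroup_prob_eq_0 assms(1-4) by simp
  next
    case 2
    then show ?thesis by (rule others_eq)
  next
    case 3
    then show ?thesis using ref_eq[OF assms(1)] ref_eq[OF assms(2)] others_eq by simp
  qed
qed

lemma obs_equiv_if_free_eq:
  assumes "x \<in> Th" "y \<in> Th" "x \<noteq> y"
    and "\<forall>(p, m, s)\<in>free_outcomes. subgroup_prob p m s x = subgroup_prob p m s y"
  shows "obs_equiv N Pth sub gam L grp x y"
proof -
  have "qsens Pth sub gam L grp j s x = qsens Pth sub gam L grp j s y" if "j < N" for j s
    unfolding qsens_eq_subgroup_prob
    using grp_range that by (intro subgroup_prob_eq_if_free_eq assms) auto
  then show ?thesis
    using assms(1-3) by (simp add: obs_equiv_def pr_u_eq_prod)
qed

lemma exists_nonidentifiable_point_in_open: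
  assumes card: "card free_outcomes < CARD('d)"
    and cont: "\<forall>j<N. \<forall>s\<in>outcomes R L (fst (grp j)) (snd (grp j)).
                 continuous_on Th (\<lambda>t. qsens Pth sub gam L grp j s t)"
    and V: "open V" "V \<noteq> {}" "V \<subseteq> Th"
  shows "\<exists>x\<in>V. \<not> identifiable_point Th N Pth sub gam L grp x"
proof -
  have "continuous_on V (subgroup_prob p m s)" if "(p, m, s) \<in> free_outcomes" for p m s
  proof -
    from that have pm: "p < P" "m < M p" "s \<in> outcomes R L p m" by (auto simp: free_outcomes_def)
    have "continuous_on Th (qsens Pth sub gam L grp (representative p m) s)"
      using cont representative[OF pm(1,2)] pm(3) by simp
    then have "continuous_on Th (subgroup_prob p m s)"
      using representative[OF pm(1,2)] by (simp add: qsens_eq_subgroup_prob)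
    then show ?thesis using V(3) by (rule continuous_on_subset)
  qed
  then obtain x y where "x \<in> V" "y \<in> V" "x \<noteq> y"
    and "\<forall>(p, m, s)\<in>free_outcomes. subgroup_prob p m s x = subgroup_prob p m s y"
    using continuous_on_not_inj_if_card_less[OF finite_free_outcomes card V(1,2),
        of "\<lambda>(p, m, s). subgroup_prob p m s"]
    by (auto simp: case_prod_beta)
  then have "obs_equiv N Pth sub gam L grp x y"
    using V(3) by (intro obs_equiv_if_free_eq) auto
  then show ?thesis
    using \<open>x \<in> V\<close> \<open>y \<in> V\<close> V(3) unfolding identifiable_point_def by blast
qed

lemma gradient_in_span_free:
  assumes th: "th \<in> interior Th"
    and deriv: "\<forall>j<N. \<forall>s\<in>outcomes R L (fst (grp j)) (snd (grp j)).
                  ((\<lambda>t. qsens Pth sub gam L grp j s t) has_derivative (\<lambda>h. G j s \<bullet> h)) (at th)"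
    and j: "j < N" and s: "s \<in> outcomes R L (fst (grp j)) (snd (grp j))"
  shows "G j s \<in> span ((\<lambda>(p, m, s). G (representative p m) s) ` free_outcomes)"
proof -
  obtain p m where grp_j: "grp j = (p, m)" by fastforce
  then have pm: "p < P" "m < M p" using grp_range j by auto
  define r where "r = representative p m"
  have r: "r < N" "grp r = grp j" using representative[OF pm] grp_j by (auto simp: r_def)
  have "Th \<noteq> {}" using th interior_subset by blast
  then have ref: "ref_outcome p m \<in> outcomes R L p m" using ref_outcome_in_outcomes pm by blast
  let ?S = "(\<lambda>(p, m, s). G (representative p m) s) ` free_outcomes"
  have deriv_j: "(subgroup_prob p m s' has_derivative (\<lambda>h. G j s' \<bullet> h)) (at th)"
    if "s' \<in> outcomes R L p m" for s'
    using deriv[rule_format, OF j] that grp_j by (simp add: qsens_eq_subgroup_prob)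
  have "G j s' = G r s'" if "s' \<in> outcomes R L p m" for s'
  proof -
    have "(subgroup_prob p m s' has_derivative (\<lambda>h. G r s' \<bullet> h)) (at th)"
      using deriv[rule_format, OF r(1)] r(2) that grp_j by (simp add: qsens_eq_subgroup_prob)
    then show ?thesis
      using deriv_j[OF that] has_derivative_unique inner_left_injective by metis
  qed
  then have others_in_span: "G j s' \<in> span ?S" if "s' \<in> outcomes R L p m - {ref_outcome p m}" for s'
    using that pm by (auto simp: free_outcomes_def r_def intro!: span_base image_eqI[where x="(p, m, s')"])
  have "(\<Sum>s'\<in>outcomes R L p m. G j s') = 0"
    using sum_subgroup_prob[OF pm]
    by (intro gradients_sum_eq_0_if_sum_eq_1[OF th finite_outcomes deriv_j]) auto
  then have "G j (ref_outcome p m) = - (\<Sum>s'\<in>outcomes R L p m - {ref_outcome p m}. G j s')"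
    using ref finite_outcomes by (simp add: sum.remove eq_neg_iff_add_eq_0)
  also have "\<dots> \<in> span ?S"
    using others_in_span by (intro span_neg span_sum) auto
  finally show ?thesis
    using others_in_span s grp_j by (cases "s = ref_outcome p m") auto
qed

lemma fisher_info_not_invertible:
  assumes card: "card free_outcomes < CARD('d)"
    and th: "th \<in> interior Th"
    and deriv: "\<forall>j<N. \<forall>s\<in>outcomes R L (fst (grp j)) (snd (grp j)).
                  ((\<lambda>t. qsens Pth sub gam L grp j s t) has_derivative (\<lambda>h. G j s \<bullet> h)) (at th)"
  shows "\<not> invertible (fisher_info N (\<lambda>j. outcomes R L (fst (grp j)) (snd (grp j)))
                         (qsens Pth sub gam L grp) G th)"
proof -
  let ?S = "(\<lambda>(p, m, s). G (representative p m) s) ` free_outcomes"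
  have "dim ?S \<le> card free_outcomes"
    using finite_free_outcomes by (intro order_trans[OF dim_le_card' card_image_le]) auto
  then have "dim ?S < DIM(real^'d)" using card by simp
  then obtain v :: "real^'d" where "v \<noteq> 0" and v: "\<And>y. y \<in> span ?S \<Longrightarrow> orthogonal v y"
    using orthogonal_to_subspace_exists by blast
  have "\<forall>j<N. \<forall>s\<in>outcomes R L (fst (grp j)) (snd (grp j)). G j s \<bullet> v = 0"
    using v[OF gradient_in_span_free[OF th deriv]] by (simp add: orthogonal_def inner_commute)
  then have "fisher_info N (\<lambda>j. outcomes R L (fst (grp j)) (snd (grp j))) (qsens Pth sub gam L grp) G th *v v = 0"
    by (rule fisher_info_mulv_eq_0)
  then show ?thesis using \<open>v \<noteq> 0\<close> by (rule not_invertible_if_mulv_eq_0)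
qed

end

theorem theorem3:
  fixes Th :: "(real^'d) set"
    and N P :: nat
    and grp :: "nat \<Rightarrow> nat \<times> nat"
    and M :: "nat \<Rightarrow> nat"
    and L :: "nat \<Rightarrow> nat \<Rightarrow> nat"
    and R :: "nat \<Rightarrow> nat \<Rightarrow> nat \<Rightarrow> nat"
    and X :: "nat \<Rightarrow> 'x measure"
    and Pth :: "nat \<Rightarrow> real^'d \<Rightarrow> 'x measure"
    and Y :: "nat \<Rightarrow> nat \<Rightarrow> nat \<Rightarrow> 'y measure"
    and sub :: "nat \<Rightarrow> nat \<Rightarrow> nat \<Rightarrow> 'x \<Rightarrow> 'y"
    and gam :: "nat \<Rightarrow> nat \<Rightarrow> nat \<Rightarrow> 'y \<Rightarrow> nat"
  assumes PN: "P < N"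
    and grp_range: "\<forall>j<N. fst (grp j) < P \<and> snd (grp j) < M (fst (grp j))"
    and M_pos: "\<forall>p<P. 0 < M p"
    and subgroups_nonempty: "\<forall>p<P. \<forall>m<M p. \<exists>j<N. grp j = (p, m)"
    and models: "\<forall>p<P. \<forall>th\<in>Th. prob_space (Pth p th) \<and> sets (Pth p th) = sets (X p)"
    and sub_meas: "\<forall>p<P. \<forall>m<M p. \<forall>l<L p m. sub p m l \<in> measurable (X p) (Y p m l)"
    and gam_meas: "\<forall>p<P. \<forall>m<M p. \<forall>l<L p m. gam p m l \<in> measurable (Y p m l) (count_space UNIV)"
    and gam_levels: "\<forall>p<P. \<forall>m<M p. \<forall>l<L p m. \<forall>y\<in>space (Y p m l). gam p m l y \<in> {1..R p m l}"
    and int_ne: "interior Th \<noteq> {}"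
    and dim: "int CARD('d) > lambda_ISM P M L R"
  shows
    "((\<forall>j<N. \<forall>s\<in>outcomes R L (fst (grp j)) (snd (grp j)).
         \<exists>g. (\<forall>th\<in>Th. ((\<lambda>t. qsens Pth sub gam L grp j s t) has_derivative (\<lambda>h. g th \<bullet> h)) (at th within Th))
            \<and> (\<forall>th\<in>Th. g differentiable (at th within Th)))
      \<longrightarrow> (\<forall>th\<in>interior Th. \<forall>G.
             (\<forall>j<N. \<forall>s\<in>outcomes R L (fst (grp j)) (snd (grp j)).
                ((\<lambda>t. qsens Pth sub gam L grp j s t) has_derivative (\<lambda>h. G j s \<bullet> h)) (at th))
             \<longrightarrow> \<not> invertible (fisher_info N (\<lambda>j. outcomes R L (fst (grp j)) (snd (grp j)))
                                   (qsens Pth sub gam L grp) G th)))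
     \<and>
     ((\<forall>j<N. \<forall>s\<in>outcomes R L (fst (grp j)) (snd (grp j)).
         continuous_on Th (\<lambda>t. qsens Pth sub gam L grp j s t))
      \<longrightarrow> \<not> identifiable_space Th N Pth sub gam L grp
          \<and> (\<forall>U. open U \<and> U \<noteq> {} \<and> U \<subseteq> Th \<longrightarrow>
                 infinite {th\<in>U. \<not> identifiable_point Th N Pth sub gam L grp th}))"
proof -
  interpret identical_models_system Th N P grp M L R X Pth Y sub gam
    using grp_range subgroups_nonempty models sub_meas gam_meas gam_levels by unfold_locales
  have "int (card free_outcomes) \<le> lambda_ISM P M L R"
    using int_ne interior_subset by (intro card_free_outcomes_le) blast
  then have card: "card free_outcomes < CARD('d)" using dim by linarith
  show ?thesis
  proof (intro conjI impI allI ballI)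
    show "\<not> invertible (fisher_info N (\<lambda>j. outcomes R L (fst (grp j)) (snd (grp j)))
                         (qsens Pth sub gam L grp) G th)"
      if "th \<in> interior Th"
        and "\<forall>j<N. \<forall>s\<in>outcomes R L (fst (grp j)) (snd (grp j)).
               ((\<lambda>t. qsens Pth sub gam L grp j s t) has_derivative (\<lambda>h. G j s \<bullet> h)) (at th)"
      for th G
      using fisher_info_not_invertible[OF card that] .
  next
    assume cont: "\<forall>j<N. \<forall>s\<in>outcomes R L (fst (grp j)) (snd (grp j)).
                    continuous_on Th (\<lambda>t. qsens Pth sub gam L grp j s t)"
    note nonidentifiable = exists_nonidentifiable_point_in_open[OF card cont]
    show "\<not> identifiable_space Th N Pth sub gam L grp"
      using nonidentifiable[OF open_interior int_ne interior_subset] interior_subset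
      unfolding identifiable_space_def by blast
    show "infinite {th \<in> U. \<not> identifiable_point Th N Pth sub gam L grp th}"
      if "open U \<and> U \<noteq> {} \<and> U \<subseteq> Th" for U
      using that nonidentifiable by (intro infinite_if_meets_every_open_subset) auto
  qed
qed

end
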